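(* Let $q$ be a prime power and $k\ge3$, $h\ge2$ integers, and $1\le u_0<u_1\le\dots\le u_h$ integers. Let $U_0,U_1,\dots,U_h$ be subspaces of $\mathbf F_q^k$ of dimensions $u_0,u_1,\dots,u_h$ with $U_i\cap U_j=U_0$ for all distinct $i,j\in\{1,\dots,h\}$, and assume $q^k-q^{k-1}>q^{u_0}-1+\sum_{i=1}^h(q^{u_i}-q^{u_0})$. Let $U$ be the set of nonzero vectors of $\mathbf F_q^k$ not in $U_1\cup\dots\cup U_h$, let $\widetilde G$ be a matrix whose columns consist of exactly one representative of each class $\{\lambda\mathbf v:\lambda\in\mathbf F_q^*\}$, $\mathbf v\in U$, and let $\mathbf C$ be the linear code with generator matrix $\widetilde G$, with parameters $\big[\frac{(q^k-q^{u_0})-\sum_{i=1}^h(q^{u_i}-q^{u_0})}{q-1},k,d=q^{k-1}-\sum_{i=1}^hq^{u_i-1}\big]_q$. Then $\mathbf C$ is distance optimal in the following cases: 1) $u_1=\dots=u_{s_1}<u_{s_1+1}=\dots=u_{s_1+s_2}<\dots<u_{s_1+\dots+s_{t-1}+1}=\dots=u_{s_1+\dots+s_t}$ with $1\le s_i<q$ ($i=1,\dots,t$), $h=s_1+\dots+s_t$, and $u_1>(h-1)\frac{q^{u_0}-1}{q-1}$; 2) $u_1=\dots=u_h=u$ and $i_h+u>(h-1)\frac{q^{u_0}-1}{q-1}+\sum_{i=1}^{k-u}\lfloor h/q^i\rfloor$.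
   Context: For a positive integer $h$ with $q$-adic expansion $h=h_{m-1}q^{m-1}+\dots+h_0$ ($0\le h_i<q$), $i_h$ denotes the least index $i\ge0$ with $h_i>0$. A linear $[n,k,d]_q$ code is distance optimal if no linear $[n,k,d+1]_q$ code exists. *)

theory Defs
  imports Complex_Main "HOL-Library.Function_Algebras"
begin

text \<open>Vectors of F^n are represented as functions nat => 'a that vanish outside {..<n}.
  The vector space structure is the pointwise one (from Function_Algebras),
  with scalar multiplication sc.\<close>

definition sc :: "'a::field \<Rightarrow> (nat \<Rightarrow> 'a) \<Rightarrow> (nat \<Rightarrow> 'a)" where
  "sc c v = (\<lambda>i. c * v i)"

interpretation fv: vector_space "sc :: 'a::field \<Rightarrow> (nat \<Rightarrow> 'a) \<Rightarrow> (nat \<Rightarrow> 'a)"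
  by unfold_locales (auto simp: sc_def fun_eq_iff algebra_simps)

definition fvecs :: "nat \<Rightarrow> (nat \<Rightarrow> 'a::zero) set" where
  "fvecs n = {v. \<forall>i\<ge>n. v i = 0}"

definition lsubspace :: "nat \<Rightarrow> (nat \<Rightarrow> 'a::field) set \<Rightarrow> bool" where
  "lsubspace n W \<longleftrightarrow> W \<subseteq> fvecs n \<and> fv.subspace W"

abbreviation vdim :: "(nat \<Rightarrow> 'a::field) set \<Rightarrow> nat" where
  "vdim W \<equiv> fv.dim W"

definition hdist :: "(nat \<Rightarrow> 'a::zero) \<Rightarrow> (nat \<Rightarrow> 'a) \<Rightarrow> nat" where
  "hdist x y = card {i. x i \<noteq> y i}"

definition min_dist :: "(nat \<Rightarrow> 'a::zero) set \<Rightarrow> nat" where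
  "min_dist C = Min {hdist x y | x y. x \<in> C \<and> y \<in> C \<and> x \<noteq> y}"

text \<open>A linear [n,k,d]_q code (q = CARD('a)).\<close>
definition lin_code :: "nat \<Rightarrow> nat \<Rightarrow> nat \<Rightarrow> (nat \<Rightarrow> 'a::{field,finite}) set \<Rightarrow> bool" where
  "lin_code n k d C \<longleftrightarrow> lsubspace n C \<and> vdim C = k \<and> min_dist C = d"

definition distance_optimal :: "nat \<Rightarrow> nat \<Rightarrow> nat \<Rightarrow> (nat \<Rightarrow> 'a::{field,finite}) set \<Rightarrow> bool" where
  "distance_optimal n k d C \<longleftrightarrow>
     lin_code n k d C \<and> \<not> (\<exists>C' :: (nat \<Rightarrow> 'a) set. lin_code n k (d + 1) C')"

text \<open>The code generated by the k x n matrix whose j-th column is cols ! j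
  (row space: all x G for x in F^k).\<close>
definition gen_code :: "nat \<Rightarrow> (nat \<Rightarrow> 'a::field) list \<Rightarrow> (nat \<Rightarrow> 'a) set" where
  "gen_code k cols =
     {(\<lambda>j. if j < length cols then (\<Sum>i<k. x i * (cols ! j) i) else 0) | x :: nat \<Rightarrow> 'a. True}"

text \<open>i_h: least index i with nonzero q-adic digit h_i of h.\<close>
definition low_digit :: "nat \<Rightarrow> nat \<Rightarrow> nat" where
  "low_digit q h = (LEAST i. (h div q ^ i) mod q > 0)"

end

theory Submission
  imports Defs "HOL-Library.FuncSet" "HOL-Library.Cardinality"
begin

text \<open>
  The code is the projective code of the point set of all nonzero vectors outside the
  subspaces U_1, ..., U_h, so its length n satisfies (q - 1) n = q^k - |U_1 \<union> ... \<union> U_h|,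
  and counting the points off a hyperplane shows that every nonzero codeword has weight at
  least d = q^(k-1) - \<Sigma> q^(u_i - 1). Since every linear [n, k, d'] code satisfies the Griesmer
  bound n \<ge> \<Sigma>_(i<k) ceil(d' / q^i), it suffices to show n < \<Sigma>_(i<k) ceil((d + 1) / q^i);
  this also forces the minimum distance to be exactly d. Expanding ceil((d + 1) / q^i) along
  the q-adic digits of \<Sigma> q^(u_j - 1) reduces this to
  (h - 1)(q^(u_0) - 1) < (q - 1) \<Sigma>_(i<k) \<delta>_i, where \<delta>_i = 1 - ceil(L_i / q^i) and L_i is the
  sum of the residues of the q^(u_j - 1) modulo q^i. In the first case no exponent occurs q
  times, so L_i < q^i and \<delta>_i \<ge> [i < u_1]; in the second case
  \<delta>_(u - 1 + l) = 1 - ceil(h / q^l), which is 1 - h / q^l as long as l \<le> i_h.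
\<close>

lemma sc_apply: "sc c v i = c * v i"
  by (simp add: sc_def)

lemma sc_inverse: "c \<noteq> 0 \<Longrightarrow> sc (inverse c) (sc c v) = (v :: nat \<Rightarrow> 'a::field)"
  by (simp add: fun_eq_iff sc_apply)

lemma card_field_ge_2: "2 \<le> CARD('a::{field,finite})"
proof -
  have "card {0::'a, 1} \<le> CARD('a)"
    by (rule card_mono) auto
  then show ?thesis
    by simp
qed

lemma bij_betw_restrict_fvecs:
  "bij_betw (\<lambda>v. restrict v {..<k}) (fvecs k) (PiE {..<k} (\<lambda>_. UNIV :: 'a::zero set))"
  by (rule bij_betw_byWitness[where f' = "\<lambda>f i. if i < k then f i else 0"])
    (auto simp: fvecs_def fun_eq_iff PiE_def extensional_def)

lemma finite_fvecs: "finite (fvecs k :: (nat \<Rightarrow> 'a::{zero,finite}) set)"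
proof -
  have "finite (PiE {..<k} (\<lambda>_. UNIV :: 'a set))"
    by (simp add: finite_PiE)
  then show ?thesis
    using bij_betw_finite[OF bij_betw_restrict_fvecs] by blast
qed

lemma card_fvecs: "card (fvecs k :: (nat \<Rightarrow> 'a::{zero,finite}) set) = CARD('a) ^ k"
  using bij_betw_same_card[OF bij_betw_restrict_fvecs] by (simp add: card_PiE)

lemma subspace_fvecs: "fv.subspace (fvecs k :: (nat \<Rightarrow> 'a::field) set)"
  by (simp add: fv.subspace_def fvecs_def sc_apply)

lemma bij_betw_span_insert:
  fixes B :: "(nat \<Rightarrow> 'a::field) set"
  assumes b: "b \<notin> fv.span B"
  shows "bij_betw (\<lambda>(c, w). sc c b + w) (UNIV \<times> fv.span B) (fv.span (insert b B))"
proof (rule bij_betw_imageI)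
  let ?f = "\<lambda>(c, w). sc c b + w"
  show "inj_on ?f (UNIV \<times> fv.span B)"
  proof (rule inj_onI, clarsimp)
    fix c w c' w'
    assume w: "w \<in> fv.span B" "w' \<in> fv.span B" and eq: "sc c b + w = sc c' b + w'"
    have "sc (c - c') b = w' - w"
      using eq by (simp add: fun_eq_iff sc_apply algebra_simps)
    then have "sc (c - c') b \<in> fv.span B"
      using w by (simp add: fv.span_diff)
    then have "c = c'"
      using b fv.span_scale[of "sc (c - c') b" B "inverse (c - c')"]
      by (cases "c = c'") (auto simp: fun_eq_iff sc_apply)
    then show "c = c' \<and> w = w'"
      using eq by simp
  qed
  show "?f ` (UNIV \<times> fv.span B) = fv.span (insert b B)"
  proof (rule set_eqI, rule iffI)
    fix x
    assume "x \<in> ?f ` (UNIV \<times> fv.span B)"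
    then obtain c w where "w \<in> fv.span B" "x = sc c b + w"
      by auto
    then show "x \<in> fv.span (insert b B)"
      unfolding fv.span_breakdown_eq by (intro exI[of _ c]) simp
  next
    fix x
    assume "x \<in> fv.span (insert b B)"
    then obtain c where "x - sc c b \<in> fv.span B"
      by (auto simp: fv.span_breakdown_eq)
    then show "x \<in> ?f ` (UNIV \<times> fv.span B)"
      by (intro image_eqI[where x = "(c, x - sc c b)"]) auto
  qed
qed

lemma card_span_independent:
  assumes "finite B" "fv.independent (B :: (nat \<Rightarrow> 'a::{field,finite}) set)"
  shows "card (fv.span B) = CARD('a) ^ card B"
  using assms
proof (induction B rule: finite_induct)
  case empty
  then show ?case
    by simp
next
  case (insert b B)
  then have indep: "fv.independent B" and b: "b \<notin> fv.span B"
    by (auto simp: fv.independent_insert)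
  have "card (fv.span (insert b B)) = CARD('a) * card (fv.span B)"
    using bij_betw_same_card[OF bij_betw_span_insert[OF b]] by (simp add: card_cartesian_product)
  then show ?case
    using insert indep by simp
qed

lemma card_subspace:
  assumes "W \<subseteq> fvecs k" "fv.subspace (W :: (nat \<Rightarrow> 'a::{field,finite}) set)"
  shows "card W = CARD('a) ^ vdim W"
proof -
  obtain B where B: "B \<subseteq> W" "fv.independent B" "W \<subseteq> fv.span B" "card B = vdim W"
    by (rule fv.basis_exists)
  have "finite B"
    using finite_subset[OF order_trans[OF B(1) assms(1)] finite_fvecs] .
  moreover have "fv.span B = W"
    using fv.span_subspace[OF B(1) B(3) assms(2)] .
  ultimately show ?thesis
    using card_span_independent B by metis
qed

definition hweight :: "(nat \<Rightarrow> 'a::zero) \<Rightarrow> nat" where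
  "hweight c = card {j. c j \<noteq> 0}"

definition griesmer_bound :: "nat \<Rightarrow> nat \<Rightarrow> nat \<Rightarrow> nat" where
  "griesmer_bound q k d = (\<Sum>i<k. (d + q ^ i - 1) div q ^ i)"

lemma griesmer_bound_mono: "d \<le> d' \<Longrightarrow> griesmer_bound q k d \<le> griesmer_bound q k d'"
  unfolding griesmer_bound_def by (intro sum_mono div_le_mono) simp

lemma ceiling_div_ceiling_div:
  fixes a b c :: nat
  assumes "b > 0" "c > 0"
  shows "((a + b - 1) div b + c - 1) div c = (a + b * c - 1) div (b * c)"
proof -
  obtain b' where b: "b = Suc b'"
    using assms(1) not0_implies_Suc by blast
  obtain c' where c: "c = Suc c'"
    using assms(2) not0_implies_Suc by blast
  have "a + b * c - 1 = (a + b') + b * c'"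
    by (simp add: b c algebra_simps)
  then have "(a + b * c - 1) div b = (a + b') div b + c'"
    using div_mult_self2[of b "a + b'" c'] b by simp
  then have "(a + b * c - 1) div (b * c) = ((a + b') div b + c') div c"
    by (simp add: div_mult2_eq)
  moreover have "(a + b - 1) div b + c - 1 = (a + b') div b + c'"
    by (simp add: b c)
  ultimately show ?thesis
    by simp
qed

lemma griesmer_bound_Suc:
  assumes "q > 0"
  shows "griesmer_bound q (Suc k) d = d + griesmer_bound q k ((d + q - 1) div q)"
proof -
  have "(d + q ^ Suc i - 1) div q ^ Suc i = ((d + q - 1) div q + q ^ i - 1) div q ^ i" for i
    using ceiling_div_ceiling_div[of q "q ^ i" d] assms by (simp add: mult.commute)
  then show ?thesis
    unfolding griesmer_bound_def sum.lessThan_Suc_shift by simp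
qed

lemma hweight_diff_eq_hdist: "hweight (x - y) = hdist x (y :: nat \<Rightarrow> 'a::ab_group_add)"
  by (simp add: hweight_def hdist_def)

lemma min_dist_le_hweight:
  assumes C: "finite C" "fv.subspace C" and c: "c \<in> C" "c \<noteq> 0"
  shows "min_dist C \<le> hweight c"
proof -
  have "finite {hdist x y | x y. x \<in> C \<and> y \<in> C \<and> x \<noteq> y}"
    using C(1) by (auto intro: finite_subset[of _ "(\<lambda>(x, y). hdist x y) ` (C \<times> C)"])
  moreover have "hdist c 0 \<in> {hdist x y | x y. x \<in> C \<and> y \<in> C \<and> x \<noteq> y}"
    using c fv.subspace_0[OF C(2)] by blast
  ultimately show ?thesis
    unfolding min_dist_def using hweight_diff_eq_hdist[of c 0] by simp
qed

lemma min_dist_ge_if_hweight_ge: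
  assumes C: "finite C" "fv.subspace C" and nontrivial: "C \<noteq> {0}"
    and weight: "\<And>c. c \<in> C \<Longrightarrow> c \<noteq> 0 \<Longrightarrow> d \<le> hweight c"
  shows "d \<le> min_dist C"
proof -
  let ?D = "{hdist x y | x y. x \<in> C \<and> y \<in> C \<and> x \<noteq> y}"
  have "finite ?D"
    using C(1) by (auto intro: finite_subset[of _ "(\<lambda>(x, y). hdist x y) ` (C \<times> C)"])
  moreover have "?D \<noteq> {}"
    using nontrivial fv.subspace_0[OF C(2)] by blast
  moreover have "d \<le> hdist x y" if "x \<in> C" "y \<in> C" "x \<noteq> y" for x y
    using weight[of "x - y"] fv.subspace_diff[OF C(2) that(1,2)] that(3)
    by (simp add: hweight_diff_eq_hdist)
  ultimately show ?thesis
    unfolding min_dist_def by auto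
qed

text \<open>Zeroing the coordinates in T stands for deleting them: the image of a code under
  puncture T is its residual code with respect to T.\<close>

definition puncture :: "nat set \<Rightarrow> (nat \<Rightarrow> 'a::zero) \<Rightarrow> nat \<Rightarrow> 'a" where
  "puncture T c = (\<lambda>j. if j \<in> T then 0 else c j)"

lemma module_hom_puncture: "module_hom sc sc (puncture T :: (nat \<Rightarrow> 'a::field) \<Rightarrow> _)"
  by unfold_locales (auto simp: puncture_def sc_def fun_eq_iff algebra_simps)

lemma sum_card_nonzero_translates:
  fixes c c0 :: "nat \<Rightarrow> 'a::{field,finite}"
  assumes "finite T" "\<forall>j\<in>T. c0 j \<noteq> 0"
  shows "(\<Sum>t\<in>UNIV. card {j\<in>T. c j + t * c0 j \<noteq> 0}) = (CARD('a) - 1) * card T"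
proof -
  have "(\<Sum>t\<in>UNIV. card {j\<in>T. c j + t * c0 j \<noteq> 0})
      = (\<Sum>t\<in>UNIV. \<Sum>j\<in>T. of_bool (c j + t * c0 j \<noteq> 0))"
    using assms(1) by (simp add: Int_def)
  also have "\<dots> = (\<Sum>j\<in>T. \<Sum>t\<in>UNIV. of_bool (c j + t * c0 j \<noteq> 0))"
    by (rule sum.swap)
  also have "\<dots> = (\<Sum>j\<in>T. CARD('a) - 1)"
  proof (rule sum.cong[OF refl])
    fix j
    assume "j \<in> T"
    then have "{t. c j + t * c0 j \<noteq> 0} = UNIV - {- c j / c0 j}"
      using assms(2) by (auto simp: field_simps add_eq_0_iff2)
    then show "(\<Sum>t\<in>UNIV. of_bool (c j + t * c0 j \<noteq> 0)) = CARD('a) - 1"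
      by (simp add: card_Diff_singleton)
  qed
  finally show ?thesis
    by simp
qed

context
  fixes C :: "(nat \<Rightarrow> 'a::{field,finite}) set" and S :: "nat set" and c0 :: "nat \<Rightarrow> 'a"
  assumes subspace: "fv.subspace C" and finite_S: "finite S"
    and support: "\<forall>c\<in>C. \<forall>j. j \<notin> S \<longrightarrow> c j = 0"
    and c0: "c0 \<in> C" "c0 \<noteq> 0"
    and c0_min: "\<forall>c\<in>C. c \<noteq> 0 \<longrightarrow> hweight c0 \<le> hweight c"
begin

lemma finite_support_min_weight: "finite {j. c0 j \<noteq> 0}"
  using support c0(1) finite_S by (auto intro: finite_subset)

lemma min_weight_codeword_kernel:
  assumes z: "z \<in> C" "\<And>j. c0 j = 0 \<Longrightarrow> z j = 0"
  shows "\<exists>t. z = sc t c0"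
proof -
  obtain j0 where j0: "c0 j0 \<noteq> 0"
    using c0(2) by (auto simp: fun_eq_iff)
  define z' where "z' = z - sc (z j0 / c0 j0) c0"
  have "z' \<in> C"
    unfolding z'_def using fv.subspace_diff[OF subspace z(1) fv.subspace_scale[OF subspace c0(1)]] .
  have "{j. z' j \<noteq> 0} \<subseteq> {j. c0 j \<noteq> 0} - {j0}"
    using z(2) j0 by (auto simp: z'_def sc_apply)
  then have "hweight z' < hweight c0"
    unfolding hweight_def using finite_support_min_weight j0
    by (metis (mono_tags) card_Diff1_less card_mono finite_Diff le_less_trans mem_Collect_eq)
  then have "z' = 0"
    using c0_min \<open>z' \<in> C\<close> leD by blast
  then show ?thesis
    by (auto simp: z'_def)
qed

lemma finite_code: "finite C"
proof -
  obtain m where m: "\<forall>j\<in>S. j < m"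
    using finite_S finite_nat_set_iff_bounded by blast
  have "C \<subseteq> fvecs m"
  proof
    fix c
    assume "c \<in> C"
    then have "c j = 0" if "m \<le> j" for j
      using support m that leD by blast
    then show "c \<in> fvecs m"
      by (simp add: fvecs_def)
  qed
  then show ?thesis
    using finite_fvecs finite_subset by blast
qed

lemma puncture_min_weight_fiber:
  assumes c: "c \<in> C"
  shows "{x \<in> C. puncture {j. c0 j \<noteq> 0} x = puncture {j. c0 j \<noteq> 0} c} = range (\<lambda>t. c + sc t c0)"
proof (rule set_eqI, rule iffI)
  fix x
  assume x: "x \<in> {x \<in> C. puncture {j. c0 j \<noteq> 0} x = puncture {j. c0 j \<noteq> 0} c}"
  have "x - c \<in> C"
    using fv.subspace_diff[OF subspace _ c] x by blast
  moreover have "(x - c) j = 0" if "c0 j = 0" for j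
  proof -
    have "puncture {j. c0 j \<noteq> 0} x j = puncture {j. c0 j \<noteq> 0} c j"
      using x by simp
    then show ?thesis
      using that by (simp add: puncture_def)
  qed
  ultimately obtain t where "x - c = sc t c0"
    using min_weight_codeword_kernel by blast
  then have "x = c + sc t c0"
    by (simp add: diff_eq_eq add.commute)
  then show "x \<in> range (\<lambda>t. c + sc t c0)"
    by blast
next
  fix x
  assume "x \<in> range (\<lambda>t. c + sc t c0)"
  then show "x \<in> {x \<in> C. puncture {j. c0 j \<noteq> 0} x = puncture {j. c0 j \<noteq> 0} c}"
    using fv.subspace_add[OF subspace c fv.subspace_scale[OF subspace c0(1)]]
    by (auto simp: puncture_def sc_apply)
qed

lemma card_puncture_min_weight: "card C = CARD('a) * card (puncture {j. c0 j \<noteq> 0} ` C)"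
proof -
  let ?P = "puncture {j. c0 j \<noteq> 0}"
  let ?F = "\<lambda>y. {x \<in> C. ?P x = y}"
  have "card (?F y) = CARD('a)" if "y \<in> ?P ` C" for y
  proof -
    have "inj (\<lambda>t. c + sc t c0)" for c
      using c0(2) by (auto intro!: injI simp: fun_eq_iff sc_apply)
    then show ?thesis
      using that puncture_min_weight_fiber by (auto simp: card_image)
  qed
  moreover have "card C = (\<Sum>y \<in> ?P ` C. card (?F y))"
  proof -
    have "C = (\<Union>y \<in> ?P ` C. ?F y)"
      by blast
    moreover have "card (\<Union>y \<in> ?P ` C. ?F y) = (\<Sum>y \<in> ?P ` C. card (?F y))"
      using finite_code by (intro card_UN_disjoint) auto
    ultimately show ?thesis
      by simp
  qed
  ultimately show ?thesis
    by simp
qed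

text \<open>Averaging hweight (c + t c0) \<ge> hweight c0 over all scalars t: each coordinate in the
  support of c0 vanishes for exactly one t.\<close>

lemma hweight_puncture_min_weight:
  assumes y: "y \<in> puncture {j. c0 j \<noteq> 0} ` C" "y \<noteq> 0"
  shows "hweight c0 \<le> CARD('a) * hweight y"
proof -
  let ?T = "{j. c0 j \<noteq> 0}"
  obtain c where c: "c \<in> C" "puncture ?T c = y"
    using y(1) by blast
  define A where "A t = {j \<in> ?T. c j + t * c0 j \<noteq> 0}" for t
  have "{j. y j \<noteq> 0} \<subseteq> S"
    using support c(1) c(2) by (auto simp: puncture_def split: if_splits)
  then have finite_y: "finite {j. y j \<noteq> 0}"
    using finite_S finite_subset by blast
  have "hweight c0 \<le> card (A t) + hweight y" for t
  proof -
    have "c + sc t c0 \<in> C"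
      using fv.subspace_add[OF subspace c(1) fv.subspace_scale[OF subspace c0(1)]] .
    moreover have "puncture ?T (c + sc t c0) = y"
      unfolding c(2)[symmetric] by (auto simp: puncture_def sc_apply)
    then have "c + sc t c0 \<noteq> 0"
      using y(2) module_hom.zero[OF module_hom_puncture] by metis
    moreover have "{j. (c + sc t c0) j \<noteq> 0} = A t \<union> {j. y j \<noteq> 0}"
      and "A t \<inter> {j. y j \<noteq> 0} = {}"
      using c(2) by (auto simp: A_def sc_apply puncture_def split: if_splits)
    then have "hweight (c + sc t c0) = card (A t) + hweight y"
      using finite_support_min_weight finite_y unfolding hweight_def A_def
      by (simp add: card_Un_disjoint)
    ultimately show ?thesis
      using c0_min by auto
  qed
  then have "CARD('a) * hweight c0 \<le> (\<Sum>t\<in>UNIV. card (A t)) + CARD('a) * hweight y"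
    using sum_mono[of UNIV "\<lambda>_. hweight c0" "\<lambda>t. card (A t) + hweight y"]
    by (simp add: sum.distrib)
  moreover have "(\<Sum>t\<in>UNIV. card (A t)) = (CARD('a) - 1) * hweight c0"
    unfolding A_def hweight_def
    using sum_card_nonzero_translates[where T = "{j. c0 j \<noteq> 0}" and c = c and c0 = c0]
      finite_support_min_weight by simp
  moreover have "CARD('a) * hweight c0 = (CARD('a) - 1) * hweight c0 + hweight c0"
    using card_field_ge_2[where 'a = 'a] by (simp add: diff_mult_distrib)
  ultimately show ?thesis
    by linarith
qed

lemma hweight_puncture_ge:
  assumes "\<forall>c\<in>C. c \<noteq> 0 \<longrightarrow> d \<le> hweight c"
    and "y \<in> puncture {j. c0 j \<noteq> 0} ` C" "y \<noteq> 0"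
  shows "(d + CARD('a) - 1) div CARD('a) \<le> hweight y"
proof -
  have "d \<le> CARD('a) * hweight y"
    using assms c0 hweight_puncture_min_weight[OF assms(2,3)] le_trans by blast
  then have "d + CARD('a) - 1 < Suc (hweight y) * CARD('a)"
    using card_field_ge_2[where 'a = 'a] by (simp add: mult.commute)
  then show ?thesis
    using less_mult_imp_div_less[where m = "d + CARD('a) - 1" and n = "CARD('a)" and i = "Suc (hweight y)"]
    by simp
qed

end

lemma griesmer_bound_le_support:
  fixes C :: "(nat \<Rightarrow> 'a::{field,finite}) set"
  assumes "fv.subspace C" "finite S" "\<forall>c\<in>C. \<forall>j. j \<notin> S \<longrightarrow> c j = 0"
    and "card C = CARD('a) ^ k" "\<forall>c\<in>C. c \<noteq> 0 \<longrightarrow> d \<le> hweight c"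
  shows "griesmer_bound CARD('a) k d \<le> card S"
  using assms
proof (induction k arbitrary: C S d)
  case 0
  then show ?case
    by (simp add: griesmer_bound_def)
next
  case (Suc k)
  let ?q = "CARD('a)"
  have "1 < card C"
    using Suc.prems(4) card_field_ge_2[where 'a = 'a] one_less_power[of ?q "Suc k"] by simp
  then have "\<not> C \<subseteq> {0}"
    using card_mono[of "{0}" C] by auto
  then obtain c1 where "c1 \<in> C" "c1 \<noteq> 0"
    by blast
  then obtain c0 where c0: "c0 \<in> C" "c0 \<noteq> 0"
    and c0_min: "\<forall>c\<in>C. c \<noteq> 0 \<longrightarrow> hweight c0 \<le> hweight c"
    using ex_has_least_nat[of "\<lambda>c. c \<in> C \<and> c \<noteq> 0" c1 hweight] by blast
  let ?T = "{j. c0 j \<noteq> 0}"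
  let ?C' = "puncture ?T ` C"
  note min_weight = Suc.prems(1-3) c0 c0_min
  have "?q * card ?C' = ?q * ?q ^ k"
    using card_puncture_min_weight[OF min_weight] Suc.prems(4) by simp
  then have card': "card ?C' = ?q ^ k"
    by simp
  have subspace': "fv.subspace ?C'"
    using module_hom.subspace_image[OF module_hom_puncture Suc.prems(1)] .
  have support': "\<forall>c\<in>?C'. \<forall>j. j \<notin> S - ?T \<longrightarrow> c j = 0"
    using Suc.prems(3) by (auto simp: puncture_def)
  have weight': "\<forall>y\<in>?C'. y \<noteq> 0 \<longrightarrow> (d + ?q - 1) div ?q \<le> hweight y"
    using hweight_puncture_ge[OF min_weight Suc.prems(5)] by blast
  have "finite (S - ?T)"
    using Suc.prems(2) by blast
  then have "griesmer_bound ?q k ((d + ?q - 1) div ?q) \<le> card (S - ?T)"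
    using Suc.IH[OF subspace' _ support' card' weight'] by blast
  moreover have "?T \<subseteq> S"
    using Suc.prems(3) c0(1) by blast
  then have "card S = card ?T + card (S - ?T)"
    using Suc.prems(2) by (simp add: card_Diff_subset card_mono finite_subset)
  moreover have "d \<le> card ?T"
    using Suc.prems(5) c0 unfolding hweight_def by blast
  ultimately show ?case
    using griesmer_bound_Suc[of ?q k d] by simp
qed

lemma griesmer_bound_le_length:
  fixes C :: "(nat \<Rightarrow> 'a::{field,finite}) set"
  assumes "lsubspace n C" "vdim C = k"
  shows "griesmer_bound CARD('a) k (min_dist C) \<le> n"
proof -
  have C: "C \<subseteq> fvecs n" "fv.subspace C"
    using assms(1) by (auto simp: lsubspace_def)
  have "finite C"
    using finite_subset[OF C(1) finite_fvecs] .
  then have "griesmer_bound CARD('a) k (min_dist C) \<le> card {..<n}"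
    using C assms(2) card_subspace[OF C]
    by (intro griesmer_bound_le_support[of C]) (auto simp: fvecs_def min_dist_le_hweight)
  then show ?thesis
    by simp
qed

lemma distance_optimal_if_below_griesmer:
  fixes C :: "(nat \<Rightarrow> 'a::{field,finite}) set"
  assumes C: "lsubspace n C" "vdim C = k" "d \<le> min_dist C"
    and short: "n < griesmer_bound CARD('a) k (d + 1)"
  shows "distance_optimal n k d C"
proof -
  have "min_dist C = d"
  proof (rule ccontr)
    assume "min_dist C \<noteq> d"
    then have "griesmer_bound CARD('a) k (d + 1) \<le> griesmer_bound CARD('a) k (min_dist C)"
      using C(3) by (intro griesmer_bound_mono) simp
    then show False
      using griesmer_bound_le_length[OF C(1,2)] short by simp
  qed
  moreover have "\<not> lin_code n k (d + 1) C'" for C' :: "(nat \<Rightarrow> 'a) set"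
    using griesmer_bound_le_length[of n C' k] short by (auto simp: lin_code_def)
  ultimately show ?thesis
    using C by (simp add: distance_optimal_def lin_code_def)
qed

definition dotp :: "nat \<Rightarrow> (nat \<Rightarrow> 'a::comm_ring_1) \<Rightarrow> (nat \<Rightarrow> 'a) \<Rightarrow> 'a" where
  "dotp k x v = (\<Sum>i<k. x i * v i)"

lemma dotp_add: "dotp k x (v + w) = dotp k x v + dotp k x w"
  by (simp add: dotp_def algebra_simps sum.distrib)

lemma dotp_diff: "dotp k x (v - w) = dotp k x v - dotp k x w"
  by (simp add: dotp_def algebra_simps sum_subtractf)

lemma dotp_sc: "dotp k x (sc c v) = c * dotp k x v"
  by (simp add: dotp_def sc_apply sum_distrib_left algebra_simps)

lemma bij_betw_kernel_translates:
  fixes W :: "(nat \<Rightarrow> 'a::field) set"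
  assumes W: "fv.subspace W" and e: "e \<in> W" "dotp k x e = 1"
  shows "bij_betw (\<lambda>(t, v). v + sc t e) (UNIV \<times> {w\<in>W. dotp k x w = 0}) W"
proof (rule bij_betw_imageI)
  let ?K = "{w\<in>W. dotp k x w = 0}"
  show "inj_on (\<lambda>(t, v). v + sc t e) (UNIV \<times> ?K)"
  proof (rule inj_onI, clarify)
    fix t v t' v'
    assume v: "dotp k x v = 0" "dotp k x v' = 0" and eq: "v + sc t e = v' + sc t' e"
    have "t = t'"
      using arg_cong[OF eq, of "dotp k x"] v e(2) by (simp add: dotp_add dotp_sc)
    then show "t = t' \<and> v = v'"
      using eq by simp
  qed
  show "(\<lambda>(t, v). v + sc t e) ` (UNIV \<times> ?K) = W"
  proof (rule set_eqI, rule iffI)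
    fix w
    assume "w \<in> (\<lambda>(t, v). v + sc t e) ` (UNIV \<times> ?K)"
    then show "w \<in> W"
      using fv.subspace_add[OF W _ fv.subspace_scale[OF W e(1)]] by auto
  next
    fix w
    assume w: "w \<in> W"
    let ?t = "dotp k x w"
    have "w - sc ?t e \<in> ?K"
      using fv.subspace_diff[OF W w fv.subspace_scale[OF W e(1)]] e(2)
      by (simp add: dotp_diff dotp_sc)
    then show "w \<in> (\<lambda>(t, v). v + sc t e) ` (UNIV \<times> ?K)"
      by (intro image_eqI[where x = "(?t, w - sc ?t e)"]) auto
  qed
qed

lemma card_nonzero_dotp_eq:
  fixes W :: "(nat \<Rightarrow> 'a::{field,finite}) set"
  assumes W: "finite W" "fv.subspace W" and e: "e \<in> W" "dotp k x e \<noteq> 0"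
  shows "CARD('a) * card {w\<in>W. dotp k x w \<noteq> 0} = (CARD('a) - 1) * card W"
proof -
  let ?K = "{w\<in>W. dotp k x w = 0}"
  have "sc (inverse (dotp k x e)) e \<in> W" "dotp k x (sc (inverse (dotp k x e)) e) = 1"
    using fv.subspace_scale[OF W(2) e(1)] e(2) by (simp_all add: dotp_sc)
  then have "card W = CARD('a) * card ?K"
    using bij_betw_same_card[OF bij_betw_kernel_translates[OF W(2)]]
    by (simp add: card_cartesian_product)
  moreover have "card W = card ?K + card {w\<in>W. dotp k x w \<noteq> 0}"
    using W(1) by (subst card_Un_disjoint[symmetric]) (auto intro: arg_cong[where f = card])
  ultimately have "card {w\<in>W. dotp k x w \<noteq> 0} = CARD('a) * card ?K - card ?K"
    by linarith
  then show ?thesis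
    using \<open>card W = CARD('a) * card ?K\<close>
    by (simp add: diff_mult_distrib diff_mult_distrib2 mult.commute mult.left_commute)
qed

lemma card_nonzero_dotp_le:
  fixes W :: "(nat \<Rightarrow> 'a::{field,finite}) set"
  assumes "finite W" "fv.subspace W"
  shows "CARD('a) * card {w\<in>W. dotp k x w \<noteq> 0} \<le> (CARD('a) - 1) * card W"
proof (cases "\<exists>e\<in>W. dotp k x e \<noteq> 0")
  case True
  then show ?thesis
    using card_nonzero_dotp_eq[OF assms] by fastforce
next
  case False
  then have "card {w\<in>W. dotp k x w \<noteq> 0} = 0"
    by (simp add: card_eq_0_iff)
  then show ?thesis
    by simp
qed

lemma card_nonzero_dotp_fvecs:
  fixes x :: "nat \<Rightarrow> 'a::{field,finite}"
  assumes x: "x \<in> fvecs k" "x \<noteq> 0"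
  shows "CARD('a) * card {v\<in>fvecs k. dotp k x v \<noteq> 0} = (CARD('a) - 1) * CARD('a) ^ k"
proof -
  obtain i0 where "x i0 \<noteq> 0"
    using x(2) by (auto simp: fun_eq_iff)
  then have "i0 < k"
    using x(1) by (cases "i0 < k") (auto simp: fvecs_def)
  define e where "e = (\<lambda>i. if i = i0 then 1 else 0 :: 'a)"
  have "e \<in> fvecs k" "dotp k x e \<noteq> 0"
    using \<open>i0 < k\<close> \<open>x i0 \<noteq> 0\<close> by (simp_all add: e_def fvecs_def dotp_def if_distrib cong: if_cong)
  then show ?thesis
    using card_nonzero_dotp_eq[OF finite_fvecs subspace_fvecs] by (simp add: card_fvecs)
qed

context
  fixes S :: "(nat \<Rightarrow> 'a::{field,finite}) set" and cols :: "(nat \<Rightarrow> 'a) list"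
  assumes scale: "\<forall>v\<in>S. \<forall>c. c \<noteq> 0 \<longrightarrow> sc c v \<in> S" and zero: "0 \<notin> S"
    and cols_in: "set cols \<subseteq> S"
    and cols_rep: "\<forall>v\<in>S. \<exists>!j. j < length cols \<and> (\<exists>c. c \<noteq> 0 \<and> cols ! j = sc c v)"
begin

lemma scalar_multiples_of_representatives_eq:
  assumes c: "c \<noteq> 0" "c' \<noteq> 0" and i: "i < length cols" and j: "j < length cols"
    and eq: "sc c (cols ! i) = sc c' (cols ! j)"
  shows "c = c' \<and> i = j"
proof -
  let ?w = "sc c (cols ! i)"
  have col: "cols ! i \<in> S"
    using cols_in i nth_mem by blast
  then have "?w \<in> S"
    using scale c(1) by blast
  moreover have "cols ! i = sc (inverse c) ?w" "cols ! j = sc (inverse c') ?w"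
    using sc_inverse c eq by metis+
  ultimately have "i = j"
    using cols_rep i j c by (metis inverse_nonzero_iff_nonzero)
  moreover obtain l where "(cols ! i) l \<noteq> 0"
    using col zero by (metis ext zero_fun_def)
  ultimately show ?thesis
    using fun_cong[OF eq, of l] by (simp add: sc_apply)
qed

lemma card_filter_scalar_representatives:
  assumes P: "\<forall>v c. c \<noteq> 0 \<longrightarrow> P (sc c v) = P v"
  shows "card {v\<in>S. P v} = (CARD('a) - 1) * card {j. j < length cols \<and> P (cols ! j)}"
proof -
  let ?J = "{j. j < length cols \<and> P (cols ! j)}"
  have "bij_betw (\<lambda>(c, j). sc c (cols ! j)) ((UNIV - {0}) \<times> ?J) {v\<in>S. P v}"
  proof (rule bij_betw_imageI)
    show "inj_on (\<lambda>(c, j). sc c (cols ! j)) ((UNIV - {0}) \<times> ?J)"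
      using scalar_multiples_of_representatives_eq by (auto intro!: inj_onI)
    show "(\<lambda>(c, j). sc c (cols ! j)) ` ((UNIV - {0}) \<times> ?J) = {v\<in>S. P v}"
    proof (rule set_eqI, rule iffI)
      fix v
      assume "v \<in> (\<lambda>(c, j). sc c (cols ! j)) ` ((UNIV - {0}) \<times> ?J)"
      then obtain c j where "c \<noteq> 0" "j < length cols" "P (cols ! j)" "v = sc c (cols ! j)"
        by auto
      moreover have "cols ! j \<in> S"
        using cols_in nth_mem \<open>j < length cols\<close> by blast
      ultimately show "v \<in> {v\<in>S. P v}"
        using scale P by auto
    next
      fix v
      assume v: "v \<in> {v\<in>S. P v}"
      then obtain j c where j: "j < length cols" "c \<noteq> 0" "cols ! j = sc c v"
        using cols_rep by blast
      then have "v = sc (inverse c) (cols ! j)" "P (cols ! j)"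
        using sc_inverse v P by auto
      then show "v \<in> (\<lambda>(c, j). sc c (cols ! j)) ` ((UNIV - {0}) \<times> ?J)"
        using j by (intro image_eqI[where x = "(inverse c, j)"]) auto
    qed
  qed
  then show ?thesis
    by (simp add: bij_betw_same_card[symmetric] card_cartesian_product card_Diff_singleton)
qed

end

definition codeword :: "nat \<Rightarrow> (nat \<Rightarrow> 'a::field) list \<Rightarrow> (nat \<Rightarrow> 'a) \<Rightarrow> nat \<Rightarrow> 'a" where
  "codeword k cols x = (\<lambda>j. if j < length cols then dotp k x (cols ! j) else 0)"

lemma hweight_codeword:
  "hweight (codeword k cols x) = card {j. j < length cols \<and> dotp k x (cols ! j) \<noteq> 0}"
  unfolding hweight_def codeword_def by (intro arg_cong[where f = card]) auto

lemma module_hom_codeword: "module_hom sc sc (codeword k cols :: (nat \<Rightarrow> 'a::field) \<Rightarrow> _)"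
  by unfold_locales
    (auto simp: codeword_def dotp_def sc_def fun_eq_iff algebra_simps sum.distrib sum_distrib_left)

lemma gen_code_eq_image_fvecs: "gen_code k cols = codeword k cols ` fvecs k"
proof -
  have "codeword k cols x = codeword k cols (\<lambda>i. if i < k then x i else 0)" for x
    by (auto simp: codeword_def dotp_def fun_eq_iff intro: sum.cong)
  moreover have "(\<lambda>i. if i < k then x i else 0) \<in> fvecs k" for x :: "nat \<Rightarrow> 'a"
    by (simp add: fvecs_def)
  ultimately show ?thesis
    unfolding gen_code_def codeword_def[symmetric] dotp_def[symmetric] by blast
qed

lemma gen_code_parameters:
  fixes cols :: "(nat \<Rightarrow> 'a::{field,finite}) list"
  assumes "0 < k" "0 < d"
    and weight: "\<forall>x\<in>fvecs k. x \<noteq> 0 \<longrightarrow> d \<le> hweight (codeword k cols x)"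
  shows "lsubspace (length cols) (gen_code k cols)" "vdim (gen_code k cols) = k"
    and "d \<le> min_dist (gen_code k cols)"
proof -
  let ?C = "gen_code k cols" and ?f = "codeword k cols"
  have subspace: "fv.subspace ?C"
    unfolding gen_code_eq_image_fvecs
    using module_hom.subspace_image[OF module_hom_codeword subspace_fvecs] .
  have "?C \<subseteq> fvecs (length cols)"
    by (auto simp: gen_code_eq_image_fvecs codeword_def fvecs_def)
  then show "lsubspace (length cols) ?C"
    using subspace by (simp add: lsubspace_def)
  have "?f x \<noteq> 0" if "x \<in> fvecs k" "x \<noteq> 0" for x
    using weight that \<open>0 < d\<close> by (auto simp: hweight_def)
  then have "inj_on ?f (fvecs k)"
    using module_hom.inj_on_iff_eq_0[OF module_hom_codeword subspace_fvecs] by blast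
  then have card: "card ?C = CARD('a) ^ k"
    by (simp add: gen_code_eq_image_fvecs card_image card_fvecs)
  then have "CARD('a) ^ vdim ?C = CARD('a) ^ k"
    using card_subspace[OF \<open>?C \<subseteq> fvecs (length cols)\<close> subspace] by simp
  then show "vdim ?C = k"
    using card_field_ge_2[where 'a = 'a] by simp
  have "finite ?C"
    using finite_subset[OF \<open>?C \<subseteq> fvecs (length cols)\<close> finite_fvecs] .
  moreover have "1 < card ?C"
    using card one_less_power[of "CARD('a)" k] card_field_ge_2[where 'a = 'a] \<open>0 < k\<close> by simp
  then have "?C \<noteq> {0}"
    by auto
  moreover have "d \<le> hweight c" if "c \<in> ?C" "c \<noteq> 0" for c
    using that weight module_hom.zero[OF module_hom_codeword]
    unfolding gen_code_eq_image_fvecs by fastforce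
  ultimately show "d \<le> min_dist ?C"
    using min_dist_ge_if_hweight_ge[OF _ subspace] by blast
qed

text \<open>The correction \<delta>_i = 1 - ceil(L_i / Q^i), where L_i is the sum of the residues of the
  Q^(u j - 1) modulo Q^i, in the i-th Griesmer term for d + 1 when
  d = Q^(k-1) - \<Sigma>_(j\<in>J) Q^(u j - 1) (see griesmer_term_split).\<close>

definition griesmer_defect :: "int \<Rightarrow> nat set \<Rightarrow> (nat \<Rightarrow> nat) \<Rightarrow> nat \<Rightarrow> int" where
  "griesmer_defect Q J u i = 1 + (- (\<Sum>j\<in>J. Q ^ (u j - 1) mod Q ^ i)) div Q ^ i"

lemma sum_powers_reversed:
  fixes Q :: int
  shows "(Q - 1) * (\<Sum>i<n. Q ^ (n - 1 - i)) = Q ^ n - 1"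
proof -
  have "(\<Sum>i<n. Q ^ (n - 1 - i)) = (\<Sum>i<n. Q ^ i)"
    using sum.nat_diff_reindex[of "\<lambda>i. Q ^ i" n] by (simp add: diff_diff_add add.commute)
  then show ?thesis
    by (simp add: power_diff_1_eq)
qed

lemma sum_power_div_powers:
  fixes Q :: int
  assumes Q: "Q \<ge> 2" and "e < k"
  shows "(Q - 1) * (\<Sum>i<k. Q ^ e div Q ^ i) = Q ^ Suc e - 1"
proof -
  have "(\<Sum>i<k. Q ^ e div Q ^ i) = (\<Sum>i<Suc e. Q ^ e div Q ^ i)"
  proof (rule sum.mono_neutral_right)
    show "\<forall>i\<in>{..<k} - {..<Suc e}. Q ^ e div Q ^ i = 0"
      using Q by (auto intro!: div_pos_pos_trivial power_strict_increasing)
  qed (use \<open>e < k\<close> in auto)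
  also have "\<dots> = (\<Sum>i<Suc e. Q ^ (Suc e - 1 - i))"
  proof (rule sum.cong[OF refl])
    fix i
    assume "i \<in> {..<Suc e}"
    then have "Q ^ e = Q ^ (e - i) * Q ^ i"
      by (simp add: power_add[symmetric])
    then show "Q ^ e div Q ^ i = Q ^ (Suc e - 1 - i)"
      using Q by simp
  qed
  finally show ?thesis
    using sum_powers_reversed[of Q "Suc e"] by simp
qed

lemma griesmer_term_split:
  fixes Q :: int
  assumes Q: "Q \<ge> 2" and "i < k"
  shows "(Q ^ (k - 1) - (\<Sum>j\<in>J. Q ^ (u j - 1)) + Q ^ i) div Q ^ i
    = Q ^ (k - 1 - i) - (\<Sum>j\<in>J. Q ^ (u j - 1) div Q ^ i) + griesmer_defect Q J u i"
proof -
  define D where "D = (\<Sum>j\<in>J. Q ^ (u j - 1) div Q ^ i)"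
  define L where "L = (\<Sum>j\<in>J. Q ^ (u j - 1) mod Q ^ i)"
  have "(\<Sum>j\<in>J. Q ^ (u j - 1)) = Q ^ i * D + L"
    unfolding D_def L_def sum_distrib_left sum.distrib[symmetric]
    by (rule sum.cong) (simp_all add: mult_div_mod_eq)
  moreover have "Q ^ (k - 1) = Q ^ (k - 1 - i) * Q ^ i"
    using \<open>i < k\<close> by (simp add: power_add[symmetric])
  ultimately have "Q ^ (k - 1) - (\<Sum>j\<in>J. Q ^ (u j - 1)) + Q ^ i
      = - L + (Q ^ (k - 1 - i) - D + 1) * Q ^ i"
    by (simp add: algebra_simps)
  also have "\<dots> div Q ^ i = Q ^ (k - 1 - i) - D + 1 + (- L) div Q ^ i"
    using Q by (subst div_mult_self1) auto
  finally show ?thesis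
    by (simp add: griesmer_defect_def D_def L_def)
qed

lemma griesmer_bound_defect_formula:
  fixes Q :: int and u :: "nat \<Rightarrow> nat"
  assumes Q: "Q \<ge> 2" and u: "\<forall>j\<in>J. 1 \<le> u j \<and> u j \<le> k"
  shows "(Q - 1) * (\<Sum>i<k. (Q ^ (k - 1) - (\<Sum>j\<in>J. Q ^ (u j - 1)) + Q ^ i) div Q ^ i)
    = Q ^ k - 1 - (\<Sum>j\<in>J. Q ^ u j - 1) + (Q - 1) * (\<Sum>i<k. griesmer_defect Q J u i)"
    (is "(Q - 1) * ?G = _")
proof -
  define A where "A = (\<Sum>i<k. Q ^ (k - 1 - i))"
  define B where "B = (\<Sum>i<k. \<Sum>j\<in>J. Q ^ (u j - 1) div Q ^ i)"
  define D where "D = (\<Sum>i<k. griesmer_defect Q J u i)"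
  have G: "?G = A - B + D"
    unfolding A_def B_def D_def using griesmer_term_split[OF Q]
    by (simp add: sum.distrib sum_subtractf)
  have "(Q - 1) * ?G = (Q - 1) * A - (Q - 1) * B + (Q - 1) * D"
    unfolding G by (simp add: algebra_simps)
  moreover have "(Q - 1) * A = Q ^ k - 1"
    unfolding A_def by (rule sum_powers_reversed)
  moreover have "(Q - 1) * B = (\<Sum>j\<in>J. Q ^ u j - 1)"
  proof -
    have "(Q - 1) * B = (\<Sum>j\<in>J. (Q - 1) * (\<Sum>i<k. Q ^ (u j - 1) div Q ^ i))"
      unfolding B_def sum_distrib_left by (rule sum.swap)
    also have "\<dots> = (\<Sum>j\<in>J. Q ^ u j - 1)"
    proof (rule sum.cong[OF refl])
      fix j
      assume "j \<in> J"
      then have "u j - 1 < k" "Suc (u j - 1) = u j"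
        using u by auto
      then show "(Q - 1) * (\<Sum>i<k. Q ^ (u j - 1) div Q ^ i) = Q ^ u j - 1"
        using sum_power_div_powers[OF Q, of "u j - 1" k] by simp
    qed
    finally show ?thesis .
  qed
  ultimately show ?thesis
    unfolding D_def by linarith
qed

lemma length_less_griesmer_bound:
  fixes q n d :: nat and u :: "nat \<Rightarrow> nat"
  assumes q: "q \<ge> 2" and u: "\<forall>j\<in>J. 1 \<le> u j \<and> u j \<le> k"
    and n: "(int q - 1) * int n = int q ^ k - int q ^ u0 - (\<Sum>j\<in>J. int q ^ u j - int q ^ u0)"
    and d: "int d = int q ^ (k - 1) - (\<Sum>j\<in>J. int q ^ (u j - 1))"
    and defect: "(int (card J) - 1) * (int q ^ u0 - 1)
      < (int q - 1) * (\<Sum>i<k. griesmer_defect (int q) J u i)"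
  shows "n < griesmer_bound q k (d + 1)"
proof -
  have "int (griesmer_bound q k (d + 1))
      = (\<Sum>i<k. (int q ^ (k - 1) - (\<Sum>j\<in>J. int q ^ (u j - 1)) + int q ^ i) div int q ^ i)"
    unfolding griesmer_bound_def of_nat_sum
  proof (rule sum.cong[OF refl])
    fix i
    have "int ((d + 1 + q ^ i - 1) div q ^ i) = (int d + int q ^ i) div int q ^ i"
      using q by (simp add: zdiv_int)
    then show "int ((d + 1 + q ^ i - 1) div q ^ i)
      = (int q ^ (k - 1) - (\<Sum>j\<in>J. int q ^ (u j - 1)) + int q ^ i) div int q ^ i"
      using d by simp
  qed
  then have "(int q - 1) * int (griesmer_bound q k (d + 1))
      = int q ^ k - 1 - (\<Sum>j\<in>J. int q ^ u j - 1)
        + (int q - 1) * (\<Sum>i<k. griesmer_defect (int q) J u i)"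
    using griesmer_bound_defect_formula[of "int q" J u k] q u by simp
  moreover have "(\<Sum>j\<in>J. int q ^ u j - 1) = (\<Sum>j\<in>J. int q ^ u j) - int (card J)"
    and "(\<Sum>j\<in>J. int q ^ u j - int q ^ u0) = (\<Sum>j\<in>J. int q ^ u j) - int (card J) * int q ^ u0"
    by (simp_all add: sum_subtractf)
  ultimately have "(int q - 1) * int n < (int q - 1) * int (griesmer_bound q k (d + 1))"
    using n defect by (simp add: algebra_simps)
  then show ?thesis
    using q by (simp add: mult_less_cancel_left)
qed

lemma griesmer_defect_eq_1:
  assumes "\<forall>j\<in>J. i < u j"
  shows "griesmer_defect Q J u i = 1"
proof -
  have "Q ^ i dvd Q ^ (u j - 1)" if "j \<in> J" for j
    using assms that by (intro le_imp_power_dvd) auto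
  then show ?thesis
    by (simp add: griesmer_defect_def)
qed

lemma griesmer_defect_nonneg:
  fixes Q :: int
  assumes "Q \<ge> 2" and "(\<Sum>j\<in>J. Q ^ (u j - 1) mod Q ^ i) \<le> Q ^ i"
  shows "griesmer_defect Q J u i \<ge> 0"
proof -
  have "(- (Q ^ i)) div Q ^ i \<le> (- (\<Sum>j\<in>J. Q ^ (u j - 1) mod Q ^ i)) div Q ^ i"
    using assms by (intro zdiv_mono1) auto
  moreover have "(- (Q ^ i)) div Q ^ i = -1"
    using assms(1) nonzero_mult_div_cancel_right[of "Q ^ i" "-1"] by simp
  ultimately show ?thesis
    by (simp add: griesmer_defect_def)
qed

lemma sum_small_powers_le:
  fixes q :: nat
  assumes q: "q \<ge> 2" and "finite J" and u: "\<forall>j\<in>J. 1 \<le> u j"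
    and mult: "\<forall>v. card {j\<in>J. u j = v} < q"
  shows "(\<Sum>j\<in>J. if u j \<le> i then q ^ (u j - 1) else 0) \<le> q ^ i - 1"
proof (induction i)
  case 0
  have "(\<Sum>j\<in>J. if u j \<le> 0 then q ^ (u j - 1) else 0) = 0"
    using u by (intro sum.neutral) auto
  then show ?case
    by simp
next
  case (Suc i)
  have "(\<Sum>j\<in>J. if u j \<le> Suc i then q ^ (u j - 1) else 0)
      = (\<Sum>j\<in>J. if u j \<le> i then q ^ (u j - 1) else 0) + (\<Sum>j\<in>J. if u j = Suc i then q ^ i else 0)"
    unfolding sum.distrib[symmetric] by (rule sum.cong[OF refl]) auto
  also have "(\<Sum>j\<in>J. if u j = Suc i then q ^ i else 0) = card {j\<in>J. u j = Suc i} * q ^ i"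
    using \<open>finite J\<close> by (simp add: sum.If_cases Int_def)
  also have "\<dots> \<le> (q - 1) * q ^ i"
    using mult[rule_format, of "Suc i"] by (intro mult_right_mono) auto
  finally have "(\<Sum>j\<in>J. if u j \<le> Suc i then q ^ (u j - 1) else 0) \<le> (q ^ i - 1) + (q - 1) * q ^ i"
    using Suc.IH by linarith
  also have "\<dots> = q ^ Suc i - 1"
    using q one_le_power[of q i] by (simp add: algebra_simps diff_mult_distrib)
  finally show ?case .
qed

lemma griesmer_defect_sum_ge_min_exponent:
  fixes q :: nat
  assumes q: "q \<ge> 2" and "finite J" and m: "1 \<le> m" "m \<le> k" "\<forall>j\<in>J. m \<le> u j"
    and mult: "\<forall>v. card {j\<in>J. u j = v} < q"
  shows "int m \<le> (\<Sum>i<k. griesmer_defect (int q) J u i)"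
proof -
  have "griesmer_defect (int q) J u i \<ge> of_bool (i < m)" for i
  proof (cases "i < m")
    case True
    then show ?thesis
      using m(3) by (simp add: griesmer_defect_eq_1 less_le_trans)
  next
    case False
    have "q ^ (u j - 1) mod q ^ i = (if u j \<le> i then q ^ (u j - 1) else 0)" if "j \<in> J" for j
    proof (cases "u j \<le> i")
      case True
      then have "q ^ (u j - 1) < q ^ i"
        using q m(1,3) that by (intro power_strict_increasing) auto
      then show ?thesis
        using True by simp
    next
      case False
      then show ?thesis
        by (simp add: le_imp_power_dvd)
    qed
    then have "(\<Sum>j\<in>J. q ^ (u j - 1) mod q ^ i) = (\<Sum>j\<in>J. if u j \<le> i then q ^ (u j - 1) else 0)"
      by (rule sum.cong[OF refl])
    also have "\<dots> \<le> q ^ i - 1"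
      using m by (intro sum_small_powers_le[OF q \<open>finite J\<close> _ mult]) auto
    finally have "(\<Sum>j\<in>J. q ^ (u j - 1) mod q ^ i) \<le> q ^ i - 1" .
    then have "(\<Sum>j\<in>J. int q ^ (u j - 1) mod int q ^ i) \<le> int q ^ i"
      by (simp flip: of_nat_power of_nat_mod of_nat_sum)
    then show ?thesis
      using griesmer_defect_nonneg[of "int q"] q False by simp
  qed
  then have "(\<Sum>i<k. of_bool (i < m)) \<le> (\<Sum>i<k. griesmer_defect (int q) J u i)"
    by (intro sum_mono) simp
  moreover have "{i. i < k \<and> i < m} = {..<m}"
    using m(2) by auto
  then have "(\<Sum>i<k. of_bool (i < m) :: int) = int m"
    by (simp add: Int_def)
  ultimately show ?thesis
    by simp
qed

lemma griesmer_defect_equal_exponents: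
  fixes q :: nat
  assumes q: "q \<ge> 2" and u: "\<forall>j\<in>J. u j = w" and "1 \<le> w" "1 \<le> l"
  shows "griesmer_defect (int q) J u (l + w - 1) = 1 + (- int (card J)) div int q ^ l"
proof -
  have pow: "int q ^ (l + w - 1) = int q ^ (w - 1) * int q ^ l"
    using assms(3,4) by (simp add: power_add[symmetric] add.commute)
  have "int q ^ (w - 1) < int q ^ (l + w - 1)"
    using q assms(3,4) by (intro power_strict_increasing) auto
  then have "(\<Sum>j\<in>J. int q ^ (u j - 1) mod int q ^ (l + w - 1)) = int q ^ (w - 1) * int (card J)"
    using u q by simp
  then have "griesmer_defect (int q) J u (l + w - 1)
      = 1 + (- (int q ^ (w - 1) * int (card J))) div (int q ^ (w - 1) * int q ^ l)"
    unfolding griesmer_defect_def pow[symmetric] by simp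
  also have "(- (int q ^ (w - 1) * int (card J))) div (int q ^ (w - 1) * int q ^ l)
      = (- int (card J)) div int q ^ l"
    using q by (simp flip: mult_minus_right)
  finally show ?thesis .
qed

lemma griesmer_defect_sum_ge_equal_exponents:
  fixes q :: nat
  assumes q: "q \<ge> 2" and u: "\<forall>j\<in>J. u j = w" and w: "1 \<le> w" "w \<le> k"
    and e: "e \<le> k - w" "q ^ e dvd card J"
  shows "int w + int e - (\<Sum>l=1..k-w. int (card J div q ^ l))
    \<le> (\<Sum>i<k. griesmer_defect (int q) J u i)"
proof -
  let ?\<delta> = "griesmer_defect (int q) J u"
  have "(\<Sum>i<k. ?\<delta> i) = (\<Sum>i<w. ?\<delta> i) + (\<Sum>i=w..<k. ?\<delta> i)"
    using w(2) by (metis sum.atLeastLessThan_concat le0 lessThan_atLeast0)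
  also have "(\<Sum>i=w..<k. ?\<delta> i) = (\<Sum>l=1..k-w. ?\<delta> (l + w - 1))"
    by (rule sum.reindex_bij_witness[of _ "\<lambda>l. l + w - 1" "\<lambda>i. i + 1 - w"]) (use w in auto)
  also have "(\<Sum>i<w. ?\<delta> i) = int w"
    using u by (simp add: griesmer_defect_eq_1)
  finally have split: "(\<Sum>i<k. ?\<delta> i) = int w + (\<Sum>l=1..k-w. ?\<delta> (l + w - 1))" .
  have "of_bool (l \<le> e) - int (card J div q ^ l) \<le> ?\<delta> (l + w - 1)" if "l \<in> {1..k-w}" for l
  proof -
    have "l \<le> e \<Longrightarrow> int q ^ l dvd int (card J)"
      using e(2) by (metis dvd_trans le_imp_power_dvd of_nat_dvd_iff of_nat_power)
    then show ?thesis
      using griesmer_defect_equal_exponents[OF q u w(1), of l] that q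
      by (auto simp: zdiv_zminus1_eq_if zdiv_int dvd_eq_mod_eq_0)
  qed
  then have "(\<Sum>l=1..k-w. of_bool (l \<le> e) - int (card J div q ^ l))
      \<le> (\<Sum>l=1..k-w. ?\<delta> (l + w - 1))"
    by (rule sum_mono)
  moreover have "{l \<in> {1..k-w}. l \<le> e} = {1..e}"
    using e(1) by auto
  then have "(\<Sum>l=1..k-w. of_bool (l \<le> e) :: int) = int e"
    by (simp add: Int_def)
  ultimately show ?thesis
    using split by (simp add: sum_subtractf)
qed

lemma power_dvd_if_le_low_digit:
  assumes "l \<le> low_digit q h"
  shows "q ^ l dvd h"
  using assms
proof (induction l)
  case 0
  then show ?case
    by simp
next
  case (Suc l)
  have "q ^ l dvd h"
    using Suc by simp
  moreover have "\<not> (h div q ^ l) mod q > 0"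
    using Suc.prems unfolding low_digit_def by (intro not_less_Least) simp
  ultimately obtain m where "h = q ^ l * (q * m)"
    by (metis dvd_eq_mod_eq_0 dvd_mult_div_cancel not_gr0)
  then show ?case
    by (simp add: mult.assoc mult.left_commute)
qed

lemma low_digit_le:
  assumes "0 < h" "h < q ^ Suc m"
  shows "low_digit q h \<le> m"
proof (rule ccontr)
  assume "\<not> low_digit q h \<le> m"
  then have "q ^ Suc m dvd h"
    by (intro power_dvd_if_le_low_digit) simp
  then show False
    using assms by (meson dvd_imp_le not_le)
qed

lemma less_mult_if_divide_less:
  fixes a b :: int
  assumes "q \<ge> 2" "real_of_int a / (real q - 1) < real_of_int b"
  shows "a < (int q - 1) * b"
proof -
  have "real_of_int a < real_of_int ((int q - 1) * b)"
    using assms by (simp add: pos_divide_less_eq mult.commute)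
  then show ?thesis
    by linarith
qed

lemma card_UN_sunflower:
  assumes "finite I" "I \<noteq> {}" and A: "\<forall>i\<in>I. finite (A i) \<and> K \<subseteq> A i"
    and meet: "\<forall>i\<in>I. \<forall>j\<in>I. i \<noteq> j \<longrightarrow> A i \<inter> A j = K"
  shows "card (\<Union>i\<in>I. A i) + card I * card K = card K + (\<Sum>i\<in>I. card (A i))"
  using assms
proof (induction I rule: finite_ne_induct)
  case (singleton i)
  then show ?case
    by simp
next
  case (insert i I)
  have "A i \<inter> (\<Union>j\<in>I. A j) = K"
  proof
    show "A i \<inter> (\<Union>j\<in>I. A j) \<subseteq> K"
    proof
      fix x
      assume "x \<in> A i \<inter> (\<Union>j\<in>I. A j)"
      then obtain j where "j \<in> I" "x \<in> A i" "x \<in> A j"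
        by blast
      moreover have "A i \<inter> A j = K"
        using insert.prems(2) \<open>j \<in> I\<close> insert.hyps(3) by (metis insertI1 insertI2)
      ultimately show "x \<in> K"
        by blast
    qed
    obtain j where "j \<in> I"
      using insert.hyps(2) by blast
    then show "K \<subseteq> A i \<inter> (\<Union>j\<in>I. A j)"
      using insert.prems(1) by blast
  qed
  then have "card (A i \<union> (\<Union>j\<in>I. A j)) + card K = card (A i) + card (\<Union>j\<in>I. A j)"
    using insert.prems insert.hyps(1) by (simp add: card_Un_Int)
  then show ?case
    using insert by simp
qed

lemma partial_sums_cover:
  fixes s :: "nat \<Rightarrow> nat"
  assumes "p \<in> {1..(\<Sum>i=1..t. s i)}"
  shows "\<exists>b\<in>{1..t}. (\<Sum>i=1..<b. s i) < p \<and> p \<le> (\<Sum>i=1..b. s i)"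
  using assms
proof (induction t)
  case (Suc t)
  show ?case
  proof (cases "p \<le> (\<Sum>i=1..t. s i)")
    case True
    then show ?thesis
      using Suc by fastforce
  next
    case False
    then show ?thesis
      using Suc.prems atLeastLessThanSuc_atLeastAtMost[of 1 t] by (intro bexI[of _ "Suc t"]) auto
  qed
qed simp

lemma less_of_stepwise_less:
  fixes f :: "nat \<Rightarrow> 'a::order"
  assumes steps: "\<forall>j\<in>{1..<t}. f j < f (j + 1)" and "a \<in> {1..t}" "b \<in> {1..t}" "a < b"
  shows "f a < f b"
proof -
  have "Suc a \<le> b"
    using \<open>a < b\<close> by simp
  then show ?thesis
  proof (induction b rule: dec_induct)
    case base
    then show ?case
      using steps assms(2-4) by simp
  next
    case (step m)
    then have "f m < f (Suc m)"
      using steps assms(2,3) by simp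
    then show ?case
      using step.IH by simp
  qed
qed

lemma card_level_set_less_of_blocks:
  fixes s u :: "nat \<Rightarrow> nat"
  assumes "0 < q" and sb: "\<forall>i\<in>{1..t}. 1 \<le> s i \<and> s i < q" and hs: "h = (\<Sum>i=1..t. s i)"
    and blk: "\<forall>j\<in>{1..t}. \<forall>p. (\<Sum>i=1..<j. s i) < p \<and> p \<le> (\<Sum>i=1..j. s i)
      \<longrightarrow> u p = u (\<Sum>i=1..j. s i)"
    and inc: "\<forall>j\<in>{1..<t}. u (\<Sum>i=1..j. s i) < u (\<Sum>i=1..j+1. s i)"
  shows "card {p\<in>{1..h}. u p = v} < q"
proof (cases "\<exists>p\<in>{1..h}. u p = v")
  case True
  let ?B = "\<lambda>b. {(\<Sum>i=1..<b. s i)<..(\<Sum>i=1..b. s i)}"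
  obtain p0 where p0: "p0 \<in> {1..h}" "u p0 = v"
    using True by blast
  then obtain b0 where b0: "b0 \<in> {1..t}" "p0 \<in> ?B b0"
    using partial_sums_cover[of p0 s t] hs by auto
  have "{p\<in>{1..h}. u p = v} \<subseteq> ?B b0"
  proof
    fix p
    assume p: "p \<in> {p\<in>{1..h}. u p = v}"
    then obtain b where b: "b \<in> {1..t}" "p \<in> ?B b"
      using partial_sums_cover[of p s t] hs by auto
    have "(\<Sum>i=1..<b. s i) < p \<and> p \<le> (\<Sum>i=1..b. s i)"
      "(\<Sum>i=1..<b0. s i) < p0 \<and> p0 \<le> (\<Sum>i=1..b0. s i)"
      using b(2) b0(2) by simp_all
    then have "u p = u (\<Sum>i=1..b. s i)" "u p0 = u (\<Sum>i=1..b0. s i)"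
      using blk b(1) b0(1) by blast+
    then have "u (\<Sum>i=1..b. s i) = u (\<Sum>i=1..b0. s i)"
      using p p0 by simp
    then have "b = b0"
      using less_of_stepwise_less[OF inc b(1) b0(1)] less_of_stepwise_less[OF inc b0(1) b(1)]
      by fastforce
    then show "p \<in> ?B b0"
      using b by simp
  qed
  then have "card {p\<in>{1..h}. u p = v} \<le> card (?B b0)"
    by (intro card_mono) auto
  also have "card (?B b0) = s b0"
    using b0(1) atLeastLessThanSuc_atLeastAtMost[of 1 "b0 - 1"] by (cases b0) auto
  finally show ?thesis
    using sb b0(1) by fastforce
next
  case False
  then have "{p\<in>{1..h}. u p = v} = {}"
    by blast
  then show ?thesis
    using \<open>0 < q\<close> by (simp only: card.empty)
qed

lemma first_le_of_stepwise_mono: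
  fixes u :: "nat \<Rightarrow> nat"
  assumes "\<forall>i. 1 \<le> i \<and> i < h \<longrightarrow> u i \<le> u (i + 1)" "j \<in> {1..h}"
  shows "u 1 \<le> u j"
proof -
  have "1 \<le> j" "j \<le> h"
    using assms(2) by auto
  then show ?thesis
  proof (induction j rule: dec_induct)
    case (step m)
    then have "u m \<le> u (m + 1)"
      using assms(1) by simp
    then show ?case
      using step by simp
  qed simp
qed

lemma exponent_sum_less_of_petal_bound:
  fixes q :: nat
  assumes q: "q \<ge> 2" and "1 \<le> k" and u: "\<forall>j\<in>J. u0 < u j"
    and bound: "int q ^ u0 - 1 + (\<Sum>j\<in>J. int q ^ u j - int q ^ u0) < int q ^ k - int q ^ (k - 1)"
  shows "(\<Sum>j\<in>J. int q ^ (u j - 1)) < int q ^ (k - 1)"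
proof -
  have pow: "int q ^ e = int q * int q ^ (e - 1)" if "1 \<le> e" for e
    using that by (metis Suc_diff_le diff_Suc_1 power_Suc)
  have "(int q - 1) * (\<Sum>j\<in>J. int q ^ (u j - 1)) = (\<Sum>j\<in>J. int q ^ u j - int q ^ (u j - 1))"
    unfolding sum_distrib_left using u pow by (intro sum.cong) (auto simp: algebra_simps)
  also have "\<dots> \<le> (\<Sum>j\<in>J. int q ^ u j - int q ^ u0)"
  proof (rule sum_mono)
    fix j
    assume "j \<in> J"
    then have "u0 \<le> u j - 1"
      using u by fastforce
    then show "int q ^ u j - int q ^ (u j - 1) \<le> int q ^ u j - int q ^ u0"
      using q by (simp add: power_increasing)
  qed
  also have "\<dots> < int q ^ k - int q ^ (k - 1)"
    using bound one_le_power[of "int q" u0] q by linarith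
  also have "\<dots> = (int q - 1) * int q ^ (k - 1)"
    using pow[OF \<open>1 \<le> k\<close>] by (simp add: algebra_simps)
  finally show ?thesis
    using q by (simp add: mult_less_cancel_left)
qed

lemma griesmer_defect_bound_of_blocks:
  fixes q :: nat and s u :: "nat \<Rightarrow> nat"
  assumes q: "q \<ge> 2" and u: "\<forall>j\<in>{1..h}. 1 \<le> u j \<and> u 1 \<le> u j" "1 \<le> h" "u 1 \<le> k"
    and sb: "\<forall>i\<in>{1..t}. 1 \<le> s i \<and> s i < q" and hs: "h = (\<Sum>i=1..t. s i)"
    and blk: "\<forall>j\<in>{1..t}. \<forall>p. (\<Sum>i=1..<j. s i) < p \<and> p \<le> (\<Sum>i=1..j. s i)
      \<longrightarrow> u p = u (\<Sum>i=1..j. s i)"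
    and inc: "\<forall>j\<in>{1..<t}. u (\<Sum>i=1..j. s i) < u (\<Sum>i=1..j+1. s i)"
    and bound: "real (u 1) > (real h - 1) * (real q ^ u0 - 1) / (real q - 1)"
  shows "(int h - 1) * (int q ^ u0 - 1) < (int q - 1) * (\<Sum>i<k. griesmer_defect (int q) {1..h} u i)"
proof -
  have "\<forall>v. card {j\<in>{1..h}. u j = v} < q"
    using card_level_set_less_of_blocks[OF _ sb hs blk inc] q by simp
  then have "int (u 1) \<le> (\<Sum>i<k. griesmer_defect (int q) {1..h} u i)"
    using u by (intro griesmer_defect_sum_ge_min_exponent[OF q]) auto
  moreover have "(int h - 1) * (int q ^ u0 - 1) < (int q - 1) * int (u 1)"
    using bound by (intro less_mult_if_divide_less[OF q]) simp
  moreover have "(int q - 1) * int (u 1) \<le> (int q - 1) * (\<Sum>i<k. griesmer_defect (int q) {1..h} u i)"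
    using calculation(1) q by (intro mult_left_mono) auto
  ultimately show ?thesis
    by linarith
qed

lemma griesmer_defect_bound_of_equal_exponents:
  fixes q :: nat
  assumes q: "q \<ge> 2" and u: "\<forall>j\<in>{1..h}. u j = w" "\<forall>j\<in>{1..h}. 1 \<le> u j \<and> u j \<le> k"
    and "1 \<le> h" and small: "(\<Sum>j\<in>{1..h}. int q ^ (u j - 1)) < int q ^ (k - 1)"
    and bound: "real (low_digit q h + w)
      > (real h - 1) * (real q ^ u0 - 1) / (real q - 1) + (\<Sum>i=1..k-w. real (h div q ^ i))"
  shows "(int h - 1) * (int q ^ u0 - 1) < (int q - 1) * (\<Sum>i<k. griesmer_defect (int q) {1..h} u i)"
proof -
  have w: "1 \<le> w" "w \<le> k"
    using u \<open>1 \<le> h\<close> by auto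
  have "int h * int q ^ (w - 1) < int q ^ (k - w) * int q ^ (w - 1)"
    using small u(1) w by (simp add: power_add[symmetric] mult.commute)
  then have "int h < int q ^ (k - w)"
    using q by simp
  also have "\<dots> \<le> int q ^ Suc (k - w)"
    using q by (intro power_increasing) auto
  finally have "h < q ^ Suc (k - w)"
    by (simp only: of_nat_power[symmetric] of_nat_less_iff)
  then have "low_digit q h \<le> k - w"
    using low_digit_le[of h q "k - w"] \<open>1 \<le> h\<close> by simp
  moreover have "q ^ low_digit q h dvd card {1..h}"
    using power_dvd_if_le_low_digit[of "low_digit q h" q h] by simp
  ultimately have sum: "int w + int (low_digit q h) - (\<Sum>l=1..k-w. int (h div q ^ l))
      \<le> (\<Sum>i<k. griesmer_defect (int q) {1..h} u i)"
    using griesmer_defect_sum_ge_equal_exponents[OF q u(1) w] by simp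
  have "(int h - 1) * (int q ^ u0 - 1)
      < (int q - 1) * (int w + int (low_digit q h) - (\<Sum>l=1..k-w. int (h div q ^ l)))"
    using bound by (intro less_mult_if_divide_less[OF q]) (simp add: algebra_simps)
  moreover have "(int q - 1) * (int w + int (low_digit q h) - (\<Sum>l=1..k-w. int (h div q ^ l)))
      \<le> (int q - 1) * (\<Sum>i<k. griesmer_defect (int q) {1..h} u i)"
    using sum q by (intro mult_left_mono) auto
  ultimately show ?thesis
    by linarith
qed

locale sunflower_code =
  fixes k h :: nat and u :: "nat \<Rightarrow> nat" and U :: "nat \<Rightarrow> (nat \<Rightarrow> 'a::{field,finite}) set"
    and cols :: "(nat \<Rightarrow> 'a) list"
  assumes two_petals: "h \<ge> 2"
    and petals: "\<forall>i\<le>h. lsubspace k (U i) \<and> vdim (U i) = u i"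
    and petals_meet: "\<forall>i j. 1 \<le> i \<and> i \<le> h \<and> 1 \<le> j \<and> j \<le> h \<and> i \<noteq> j \<longrightarrow> U i \<inter> U j = U 0"
    and cols_in: "set cols \<subseteq> {v \<in> fvecs k. v \<noteq> 0 \<and> (\<forall>i\<in>{1..h}. v \<notin> U i)}"
    and cols_rep: "\<forall>v \<in> {v \<in> fvecs k. v \<noteq> 0 \<and> (\<forall>i\<in>{1..h}. v \<notin> U i)}.
      \<exists>!j. j < length cols \<and> (\<exists>c. c \<noteq> 0 \<and> cols ! j = sc c v)"
begin

abbreviation outside_points :: "(nat \<Rightarrow> 'a) set" where
  "outside_points \<equiv> {v \<in> fvecs k. v \<noteq> 0 \<and> (\<forall>i\<in>{1..h}. v \<notin> U i)}"

lemma petal_subspace: "i \<le> h \<Longrightarrow> U i \<subseteq> fvecs k" "i \<le> h \<Longrightarrow> fv.subspace (U i)"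
  using petals by (auto simp: lsubspace_def)

lemma card_petal: "i \<le> h \<Longrightarrow> card (U i) = CARD('a) ^ u i"
  using card_subspace[OF petal_subspace] petals by simp

lemma finite_petal: "i \<le> h \<Longrightarrow> finite (U i)"
  using finite_subset[OF petal_subspace(1) finite_fvecs] .

lemma exponent_le: "i \<le> h \<Longrightarrow> u i \<le> k"
proof -
  assume "i \<le> h"
  then have "CARD('a) ^ u i \<le> CARD('a) ^ k"
    using card_mono[OF finite_fvecs petal_subspace(1)] card_petal card_fvecs by metis
  then show "u i \<le> k"
    using card_field_ge_2[where 'a = 'a] by simp
qed

lemma kernel_subset: "i \<in> {1..h} \<Longrightarrow> U 0 \<subseteq> U i"
proof -
  assume i: "i \<in> {1..h}"
  obtain j where "j \<in> {1..h}" "j \<noteq> i"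
  proof (cases "i = 1")
    case True
    then show ?thesis
      using that[of 2] two_petals by simp
  next
    case False
    then show ?thesis
      using that[of 1] two_petals by simp
  qed
  then show "U 0 \<subseteq> U i"
    using petals_meet i by (metis Int_lower1 atLeastAtMost_iff)
qed

lemma outside_points_eq: "outside_points = fvecs k - (\<Union>i\<in>{1..h}. U i)"
proof -
  have "0 \<in> U 1"
    using fv.subspace_0[OF petal_subspace(2)] two_petals by simp
  then show ?thesis
    using two_petals by force
qed

lemma union_petals_subset: "(\<Union>i\<in>{1..h}. U i) \<subseteq> fvecs k"
  using petal_subspace(1) by (intro UN_least) simp

lemma card_outside_points:
  "int (card outside_points) = int CARD('a) ^ k - int CARD('a) ^ u 0
    - (\<Sum>i=1..h. int CARD('a) ^ u i - int CARD('a) ^ u 0)"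
proof -
  let ?q = "CARD('a)"
  have "card (\<Union>i\<in>{1..h}. U i) + h * ?q ^ u 0 = ?q ^ u 0 + (\<Sum>i=1..h. ?q ^ u i)"
    using card_UN_sunflower[of "{1..h}" U "U 0"] two_petals petals_meet kernel_subset
      finite_petal card_petal by simp
  moreover have "card outside_points + card (\<Union>i\<in>{1..h}. U i) = ?q ^ k"
    unfolding outside_points_eq using card_Diff_subset[OF finite_subset[OF union_petals_subset finite_fvecs] union_petals_subset]
      card_mono[OF finite_fvecs union_petals_subset]
    by (simp add: card_fvecs)
  ultimately have nat_eq: "card outside_points + ?q ^ u 0 + (\<Sum>i=1..h. ?q ^ u i) = ?q ^ k + h * ?q ^ u 0"
    by linarith
  have "int (card outside_points) + int ?q ^ u 0 + (\<Sum>i=1..h. int ?q ^ u i)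
      = int ?q ^ k + int h * int ?q ^ u 0"
    using arg_cong[OF nat_eq, of int] by simp
  then show ?thesis
    by (simp add: sum_subtractf algebra_simps)
qed

lemma scale_outside_points: "\<forall>v\<in>outside_points. \<forall>c. c \<noteq> 0 \<longrightarrow> sc c v \<in> outside_points"
proof (intro ballI allI impI)
  fix v :: "nat \<Rightarrow> 'a" and c :: 'a
  assume v: "v \<in> outside_points" and "c \<noteq> 0"
  have "sc (inverse c) (sc c v) = v"
    using \<open>c \<noteq> 0\<close> by (simp add: fun_eq_iff sc_apply)
  then have "sc c v \<notin> U i" if "i \<in> {1..h}" for i
    using v that fv.subspace_scale[OF petal_subspace(2), of i "sc c v" "inverse c"] by auto
  moreover have "sc c v \<in> fvecs k" "sc c v \<noteq> 0"
    using v \<open>c \<noteq> 0\<close> by (auto simp: fvecs_def sc_apply fun_eq_iff)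
  ultimately show "sc c v \<in> outside_points"
    by blast
qed

lemma card_filter_outside_points:
  assumes "\<forall>v c. c \<noteq> 0 \<longrightarrow> P (sc c v) = P v"
  shows "card {v\<in>outside_points. P v} = (CARD('a) - 1) * card {j. j < length cols \<and> P (cols ! j)}"
  using card_filter_scalar_representatives[OF scale_outside_points _ cols_in cols_rep assms] by simp

lemma length_cols:
  "(int CARD('a) - 1) * int (length cols) = int CARD('a) ^ k - int CARD('a) ^ u 0
    - (\<Sum>i=1..h. int CARD('a) ^ u i - int CARD('a) ^ u 0)"
  using card_filter_outside_points[of "\<lambda>_. True"] card_outside_points card_field_ge_2[where 'a = 'a]
  by simp

lemma card_nonzero_dotp_split:
  "card {v\<in>fvecs k. dotp k x v \<noteq> 0}
    = card {v\<in>outside_points. dotp k x v \<noteq> 0} + card {v\<in>(\<Union>i\<in>{1..h}. U i). dotp k x v \<noteq> 0}"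
proof -
  let ?P = "\<Union>i\<in>{1..h}. U i"
  have "{v\<in>fvecs k. dotp k x v \<noteq> 0}
      = {v\<in>outside_points. dotp k x v \<noteq> 0} \<union> {v\<in>?P. dotp k x v \<noteq> 0}"
    unfolding outside_points_eq using union_petals_subset by blast
  moreover have "{v\<in>outside_points. dotp k x v \<noteq> 0} \<inter> {v\<in>?P. dotp k x v \<noteq> 0} = {}"
    unfolding outside_points_eq by blast
  moreover have "finite {v\<in>outside_points. dotp k x v \<noteq> 0}" "finite {v\<in>?P. dotp k x v \<noteq> 0}"
    using finite_fvecs union_petals_subset by (auto intro: finite_subset)
  ultimately show ?thesis
    by (simp add: card_Un_disjoint)
qed

lemma card_nonzero_dotp_petals_le:
  "CARD('a) * card {v\<in>(\<Union>i\<in>{1..h}. U i). dotp k x v \<noteq> 0}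
    \<le> (CARD('a) - 1) * (\<Sum>i=1..h. CARD('a) ^ u i)"
proof -
  let ?q = "CARD('a)" and ?N = "\<lambda>A. card {v\<in>A. dotp k x v \<noteq> 0}"
  have "{v\<in>(\<Union>i\<in>{1..h}. U i). dotp k x v \<noteq> 0} = (\<Union>i\<in>{1..h}. {v\<in>U i. dotp k x v \<noteq> 0})"
    by blast
  then have "?q * ?N (\<Union>i\<in>{1..h}. U i) \<le> ?q * (\<Sum>i=1..h. ?N (U i))"
    by (simp add: card_UN_le)
  also have "\<dots> = (\<Sum>i=1..h. ?q * ?N (U i))"
    by (simp add: sum_distrib_left)
  also have "\<dots> \<le> (\<Sum>i=1..h. (?q - 1) * ?q ^ u i)"
    using card_nonzero_dotp_le[OF finite_petal petal_subspace(2)] card_petal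
    by (intro sum_mono) simp
  finally show ?thesis
    by (simp add: sum_distrib_left)
qed

lemma hweight_codeword_ge:
  assumes x: "x \<in> fvecs k" "x \<noteq> 0"
  shows "int CARD('a) ^ k - (\<Sum>i=1..h. int CARD('a) ^ u i)
    \<le> int CARD('a) * int (hweight (codeword k cols x))"
proof -
  let ?q = "CARD('a)" and ?w = "hweight (codeword k cols x)"
  let ?N = "\<lambda>A. card {v\<in>A. dotp k x v \<noteq> 0}"
  have "(?q - 1) * ?w = ?N outside_points"
    using card_filter_outside_points[of "\<lambda>v. dotp k x v \<noteq> 0"] by (simp add: hweight_codeword dotp_sc)
  then have "(?q - 1) * ?q ^ k = ?q * ((?q - 1) * ?w) + ?q * ?N (\<Union>i\<in>{1..h}. U i)"
    by (simp only: card_nonzero_dotp_fvecs[OF x, symmetric] card_nonzero_dotp_split add_mult_distrib2)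
  then have "(?q - 1) * ?q ^ k \<le> ?q * ((?q - 1) * ?w) + (?q - 1) * (\<Sum>i=1..h. ?q ^ u i)"
    using card_nonzero_dotp_petals_le[of x] by linarith
  then have "(?q - 1) * ?q ^ k \<le> (?q - 1) * (?q * ?w + (\<Sum>i=1..h. ?q ^ u i))"
    by (metis add_mult_distrib2 mult.left_commute)
  then have "?q ^ k \<le> ?q * ?w + (\<Sum>i=1..h. ?q ^ u i)"
    using card_field_ge_2[where 'a = 'a] by simp
  then show ?thesis
    by (simp flip: of_nat_power of_nat_mult of_nat_sum of_nat_add)
qed

lemma gen_code_parameters_sunflower:
  assumes "1 \<le> k" "\<forall>i\<in>{1..h}. 1 \<le> u i"
    and d: "int d = int CARD('a) ^ (k - 1) - (\<Sum>i=1..h. int CARD('a) ^ (u i - 1))" "0 < d"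
  shows "lsubspace (length cols) (gen_code k cols) \<and> vdim (gen_code k cols) = k
    \<and> d \<le> min_dist (gen_code k cols)"
proof -
  have "(\<Sum>i=1..h. int CARD('a) ^ u i) = int CARD('a) * (\<Sum>i=1..h. int CARD('a) ^ (u i - 1))"
    unfolding sum_distrib_left
  proof (rule sum.cong[OF refl])
    fix i
    assume "i \<in> {1..h}"
    then have "0 < u i"
      using assms(2) by fastforce
    then show "int CARD('a) ^ u i = int CARD('a) * int CARD('a) ^ (u i - 1)"
      using power_minus_mult[of "u i" "int CARD('a)"] by (simp add: mult.commute)
  qed
  moreover have "int CARD('a) ^ k = int CARD('a) * int CARD('a) ^ (k - 1)"
    using assms(1) power_minus_mult[of k "int CARD('a)"] by (simp add: mult.commute)
  ultimately have "int CARD('a) * int d = int CARD('a) ^ k - (\<Sum>i=1..h. int CARD('a) ^ u i)"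
    using d(1) by (simp add: right_diff_distrib)
  then have "int CARD('a) * int d \<le> int CARD('a) * int (hweight (codeword k cols x))"
    if "x \<in> fvecs k" "x \<noteq> 0" for x
    using hweight_codeword_ge[OF that] by simp
  then have "\<forall>x\<in>fvecs k. x \<noteq> 0 \<longrightarrow> d \<le> hweight (codeword k cols x)"
    using card_field_ge_2[where 'a = 'a] by (simp add: mult_le_cancel_left_pos)
  then show ?thesis
    using gen_code_parameters[of k d cols] assms(1) d(2) by simp
qed

end

theorem theorem3p3:
  fixes k h :: nat
    and u :: "nat \<Rightarrow> nat"
    and U :: "nat \<Rightarrow> (nat \<Rightarrow> 'a::{field,finite}) set"
    and cols :: "(nat \<Rightarrow> 'a) list"
  defines "q \<equiv> card (UNIV :: 'a set)"
  assumes k3: "k \<ge> 3" and h2: "h \<ge> 2"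
    and u0: "1 \<le> u 0" and u01: "u 0 < u 1"
    and u_mono: "\<forall>i. 1 \<le> i \<and> i < h \<longrightarrow> u i \<le> u (i + 1)"
    and U_sub: "\<forall>i\<le>h. lsubspace k (U i) \<and> vdim (U i) = u i"
    and U_int: "\<forall>i j. 1 \<le> i \<and> i \<le> h \<and> 1 \<le> j \<and> j \<le> h \<and> i \<noteq> j \<longrightarrow> U i \<inter> U j = U 0"
    and ineq: "int q ^ k - int q ^ (k - 1) > int q ^ u 0 - 1 + (\<Sum>i=1..h. int q ^ u i - int q ^ u 0)"
    and cols_in: "set cols \<subseteq> {v \<in> fvecs k. v \<noteq> 0 \<and> (\<forall>i\<in>{1..h}. v \<notin> U i)}"
    and cols_rep: "\<forall>v \<in> {v \<in> fvecs k. v \<noteq> 0 \<and> (\<forall>i\<in>{1..h}. v \<notin> U i)}.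
                     \<exists>!j. j < length cols \<and> (\<exists>c. c \<noteq> 0 \<and> cols ! j = sc c v)"
    and cases:
      "(\<exists>(t::nat) (s::nat \<Rightarrow> nat).
          (\<forall>i\<in>{1..t}. 1 \<le> s i \<and> s i < q) \<and>
          h = (\<Sum>i=1..t. s i) \<and>
          (\<forall>j\<in>{1..t}. \<forall>p. (\<Sum>i=1..<j. s i) < p \<and> p \<le> (\<Sum>i=1..j. s i)
              \<longrightarrow> u p = u (\<Sum>i=1..j. s i)) \<and>
          (\<forall>j\<in>{1..<t}. u (\<Sum>i=1..j. s i) < u (\<Sum>i=1..j+1. s i)) \<and>
          real (u 1) > (real h - 1) * (real q ^ u 0 - 1) / (real q - 1))
       \<or>
       (\<exists>uu. (\<forall>i\<in>{1..h}. u i = uu) \<and>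
          real (low_digit q h + uu) >
            (real h - 1) * (real q ^ u 0 - 1) / (real q - 1)
            + (\<Sum>i=1..k-uu. real (h div q ^ i)))"
  shows "distance_optimal
           (nat ((int q ^ k - int q ^ u 0 - (\<Sum>i=1..h. int q ^ u i - int q ^ u 0)) div (int q - 1)))
           k
           (nat (int q ^ (k - 1) - (\<Sum>i=1..h. int q ^ (u i - 1))))
           (gen_code k cols)"
proof -
  interpret sunflower_code k h u U cols
    using h2 U_sub U_int cols_in cols_rep by unfold_locales
  have q2: "q \<ge> 2"
    unfolding q_def by (rule card_field_ge_2)
  have u_bounds: "\<forall>j\<in>{1..h}. u 0 < u j \<and> u 1 \<le> u j \<and> u j \<le> k"
    using first_le_of_stepwise_mono[OF u_mono] u01 exponent_le by fastforce
  then have u_pos: "\<forall>i\<in>{1..h}. 1 \<le> u i"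
    by fastforce
  define M where "M = (\<Sum>i=1..h. int q ^ (u i - 1))"
  define d where "d = nat (int q ^ (k - 1) - M)"
  have "M < int q ^ (k - 1)"
    unfolding M_def using exponent_sum_less_of_petal_bound[OF q2 _ _ ineq] k3 u_bounds by auto
  then have d: "int d = int q ^ (k - 1) - M" "0 < d"
    unfolding d_def by auto
  have code: "lsubspace (length cols) (gen_code k cols)" "vdim (gen_code k cols) = k"
    "d \<le> min_dist (gen_code k cols)"
    using gen_code_parameters_sunflower[OF _ u_pos d[unfolded M_def q_def]] k3 by auto
  have "\<forall>j\<in>{1..h}. 1 \<le> u j \<and> u 1 \<le> u j" "\<forall>j\<in>{1..h}. 1 \<le> u j \<and> u j \<le> k" "1 \<le> h" "u 1 \<le> k"
    using u_bounds h2 by auto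
  then have defect:
    "(int h - 1) * (int q ^ u 0 - 1) < (int q - 1) * (\<Sum>i<k. griesmer_defect (int q) {1..h} u i)"
    using cases \<open>M < int q ^ (k - 1)\<close>[unfolded M_def]
    by (elim disjE exE conjE) (blast intro: griesmer_defect_bound_of_blocks[OF q2]
        griesmer_defect_bound_of_equal_exponents[OF q2])+
  have "length cols < griesmer_bound q k (d + 1)"
    by (rule length_less_griesmer_bound[OF q2 _ length_cols[folded q_def] d(1)[unfolded M_def]])
      (use u_bounds defect in auto)
  moreover have "nat ((int q ^ k - int q ^ u 0 - (\<Sum>i=1..h. int q ^ u i - int q ^ u 0)) div (int q - 1))
      = length cols"
    unfolding length_cols[folded q_def, symmetric] using q2 by simp
  moreover have "nat (int q ^ (k - 1) - (\<Sum>i=1..h. int q ^ (u i - 1))) = d"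
    by (simp add: d_def M_def)
  ultimately show ?thesis
    using distance_optimal_if_below_griesmer[OF code] unfolding q_def by simp
qed

end
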